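(* Let $\varphi$ be a primitive $k$-uniform morphism on $\{0,1\}$ with $\varphi(0)$ beginning with $0$, and let $a=|\varphi(0)|_0$, $b=|\varphi(0)|_1$, $c=|\varphi(1)|_0$, $d=|\varphi(1)|_1$ (so $a+b=c+d=k$). Let $w=\lim_{n\to\infty}\varphi^n(0)$ be the infinite fixed point of $\varphi$ starting with $0$. For a finite or infinite binary word $u$, let $g_u$ be its graphic with respect to the vectors $\mathbf v_0=(1,-b)$, $\mathbf v_1=(1,c)$. Then: 1. If $g_{\varphi(0)}(x)=0$ for some real $x$ with $0<x\le k$, then $w$ is weak abelian periodic. 2. If $g_{\varphi(0)}(k)\ge -b$, then $w$ is weak abelian periodic. 3. Suppose that $g_{\varphi(0)}(x)\neq 0$ for all real $x\in(0,k]$ and $g_{\varphi(0)}(k)<-b$. Put $\Delta=g_{\varphi(0)}(k)$, $A=\max\{g_{\varphi(0)}(i): 1\le i\le k,\ \varphi(0)_i=1\}$ and $t=\max\{g_{\varphi(1)}(i): 1\le i\le k,\ \varphi(1)_i=1\}$, where $u_i$ denotes the $i$-th letter of $u$. Then $w$ is weak abelian periodic if and only if $\Delta\cdot\frac{A-c}{-b}+t\ge A$.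
   Context: A morphism $\varphi$ on $\{0,1\}^*$ is $k$-uniform if $|\varphi(0)|=|\varphi(1)|=k$, and primitive if for some $m$ both $\varphi^m(0)$ and $\varphi^m(1)$ contain both letters. $|u|_a$ is the number of occurrences of letter $a$ in $u$. The graphic $g_u$ of a binary word $u=u_1u_2\cdots$ with respect to vectors $\mathbf v_0=(1,-b)$, $\mathbf v_1=(1,c)$ is the piecewise linear function on $[0,|u|]$ (or $[0,\infty)$) with $g_u(0)=0$, $g_u(n)=c\,|u_1\cdots u_n|_1-b\,|u_1\cdots u_n|_0$ for integers $n$, and linear between consecutive integers. For a finite word $v$, $\rho_a(v)=|v|_a/|v|$ for nonempty $v$. An infinite binary word $w$ is weak abelian periodic if $w=v_0v_1v_2\cdots$ with $v_0$ finite and $v_1,v_2,\dots$ nonempty finite words such that $\rho_a(v_i)=\rho_a(v_j)$ for $a\in\{0,1\}$ and all $i,j\ge1$. *)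

theory Defs
  imports Complex_Main
begin

definition binword :: "nat list \<Rightarrow> bool" where
  "binword u \<longleftrightarrow> set u \<subseteq> {0, 1}"

definition cnt :: "nat \<Rightarrow> nat list \<Rightarrow> nat" where
  "cnt a u = length (filter (\<lambda>x. x = a) u)"

definition morph :: "nat list \<Rightarrow> nat list \<Rightarrow> nat list \<Rightarrow> nat list" where
  "morph f0 f1 u = concat (map (\<lambda>x. if x = 0 then f0 else f1) u)"

definition uniform_morph :: "nat \<Rightarrow> nat list \<Rightarrow> nat list \<Rightarrow> bool" where
  "uniform_morph k f0 f1 \<longleftrightarrow> length f0 = k \<and> length f1 = k"

definition primitive_morph :: "nat list \<Rightarrow> nat list \<Rightarrow> bool" where
  "primitive_morph f0 f1 \<longleftrightarrow>
     (\<exists>m. {0, 1} \<subseteq> set ((morph f0 f1 ^^ m) [0]) \<and> {0, 1} \<subseteq> set ((morph f0 f1 ^^ m) [1]))"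

definition graph_pt :: "real \<Rightarrow> real \<Rightarrow> nat list \<Rightarrow> nat \<Rightarrow> real" where
  "graph_pt b c u n = c * real (cnt 1 (take n u)) - b * real (cnt 0 (take n u))"

definition graphic :: "real \<Rightarrow> real \<Rightarrow> nat list \<Rightarrow> real \<Rightarrow> real" where
  "graphic b c u x = (let n = nat \<lfloor>x\<rfloor> in
      graph_pt b c u n + (x - real n) * (graph_pt b c u (Suc n) - graph_pt b c u n))"

definition rho :: "nat \<Rightarrow> nat list \<Rightarrow> real" where
  "rho a v = real (cnt a v) / real (length v)"

text \<open>w = v_0 v_1 v_2 ... with v_i = w[p(i-1) .. p i) for i >= 1, v_0 = w[0 .. p 0);
  strict monotonicity of p makes v_1, v_2, ... nonempty.\<close>
definition weak_abelian_periodic :: "(nat \<Rightarrow> nat) \<Rightarrow> bool" where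
  "weak_abelian_periodic w \<longleftrightarrow>
     (\<exists>p :: nat \<Rightarrow> nat. strict_mono p \<and>
        (\<forall>i j a. a \<in> {0, 1} \<longrightarrow>
           rho a (map w [p i..<p (Suc i)]) = rho a (map w [p j..<p (Suc j)])))"

end

theory Submission
  imports Defs "HOL-Library.Infinite_Set"
begin

text \<open>Read the graphic of \<open>w\<close> at integer points as a walk on \<open>\<int>\<close> with step \<open>c\<close> for a \<open>1\<close>
  and \<open>-b\<close> for a \<open>0\<close>. A block between two visits of the same level has letter frequencies
  \<open>b/(b+c)\<close> and \<open>c/(b+c)\<close>; hence a walk that returns to some level infinitely often, or crosses
  some level infinitely often in both directions (it descends in steps of \<open>b\<close>), is weak abelian
  periodic. Conversely, along a weak abelian decomposition the walk is affine in the position.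

  Since \<open>w\<close> is the fixed point of \<open>\<phi>\<close>, the walk is self-similar:
  \<open>g(kn + j) = \<lambda> g(n) + g\<^bsub>\<phi>(w\<^sub>n)\<^esub>(j)\<close> with \<open>\<lambda> = a - c\<close>, so \<open>g(k\<^sup>m) = -b\<lambda>\<^sup>m\<close>.
  For \<open>\<lambda> \<le> 1\<close> this gives returns or oscillation, and so does a zero of \<open>g\<^bsub>\<phi>(0)\<^esub>\<close> when
  \<open>\<lambda> \<ge> 1\<close>. Otherwise \<open>\<lambda> \<ge> 2\<close> and \<open>g\<^bsub>\<phi>(0)\<^esub> < 0\<close> on \<open>(0, k]\<close>. If the criterion holds, iterating
  \<open>n \<mapsto> k(n - 1) + i\<close> at the maximising positions keeps the walk above \<open>A\<close> infinitely often,
  while \<open>g(k\<^sup>m) \<rightarrow> -\<infinity>\<close>. If it fails, an induction over the levels of blocks shows \<open>g \<rightarrow> -\<infinity>\<close>,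
  whereas \<open>|g(n)| = O(n\<^bsup>log\<^sub>k \<lambda>\<^esup>)\<close> is sublinear; an affine function cannot do both.\<close>

section \<open>Words and morphisms\<close>

lemma cnt_Nil [simp]: "cnt a [] = 0"
  by (simp add: cnt_def)

lemma cnt_Cons [simp]: "cnt a (x # u) = (if x = a then Suc (cnt a u) else cnt a u)"
  by (simp add: cnt_def)

lemma cnt_pos_iff: "0 < cnt a u \<longleftrightarrow> a \<in> set u"
  by (induction u) auto

lemma cnt_0_add_cnt_1: "set u \<subseteq> {0, 1} \<Longrightarrow> cnt 0 u + cnt 1 u = length u"
  by (induction u) auto

lemma morph_Nil [simp]: "morph f0 f1 [] = []"
  by (simp add: morph_def)

lemma morph_Cons [simp]: "morph f0 f1 (x # u) = (if x = 0 then f0 else f1) @ morph f0 f1 u"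
  by (simp add: morph_def)

lemma length_morph: "length f0 = k \<Longrightarrow> length f1 = k \<Longrightarrow> length (morph f0 f1 u) = k * length u"
  by (induction u) auto

lemma set_morph_subset: "set (morph f0 f1 u) \<subseteq> set f0 \<union> set f1"
  by (induction u) auto

lemma nth_morph:
  assumes "length f0 = k" "length f1 = k" "i < length u" "j < k"
  shows "morph f0 f1 u ! (k * i + j) = (if u ! i = 0 then f0 else f1) ! j"
  using assms(3)
proof (induction u arbitrary: i)
  case (Cons x u)
  then show ?case
    using assms(1,2,4) by (cases i) (auto simp: nth_append)
qed simp

lemma set_funpow_morph_subset_singleton:
  assumes "set (if x = 0 then f0 else f1) \<subseteq> {x}"
  shows "set ((morph f0 f1 ^^ m) [x]) \<subseteq> {x}"
proof (induction m)
  case (Suc m)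
  have "set (morph f0 f1 u) \<subseteq> {x}" if "set u \<subseteq> {x}" for u
    using that assms by (induction u) auto
  with Suc show ?case by simp
qed simp

section \<open>The graphic\<close>

lemma graph_pt_0 [simp]: "graph_pt b c u 0 = 0"
  by (simp add: graph_pt_def)

lemma graphic_of_nat [simp]: "graphic b c u (real n) = graph_pt b c u n"
  by (simp add: graphic_def)

lemma graphic_segment:
  assumes "0 \<le> \<theta>" "\<theta> \<le> 1"
  shows "graphic b c u (real n + \<theta>) = graph_pt b c u n + \<theta> * (graph_pt b c u (Suc n) - graph_pt b c u n)"
proof (cases "\<theta> = 1")
  case True
  then show ?thesis
    using graphic_of_nat[of b c u "Suc n"] by (simp add: add.commute)
next
  case False
  then have "\<lfloor>real n + \<theta>\<rfloor> = int n"
    using assms by (intro floor_unique) auto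
  then show ?thesis
    by (simp add: graphic_def)
qed

lemma graphic_zero_imp_graph_pt_nonneg:
  assumes "0 < x" "x \<le> real k" "graphic b c u x = 0"
  shows "\<exists>i. 1 \<le> i \<and> i \<le> k \<and> 0 \<le> graph_pt b c u i"
proof -
  define n where "n = nat (\<lceil>x\<rceil> - 1)"
  define \<theta> where "\<theta> = x - real n"
  have ceil: "real (Suc n) = real_of_int \<lceil>x\<rceil>"
    using assms(1) unfolding n_def by (simp add: of_nat_diff)
  have \<theta>: "0 < \<theta>" "\<theta> \<le> 1"
    using ceil ceiling_correct[of x] unfolding \<theta>_def by linarith+
  have "Suc n \<le> k"
    using ceil assms(2) by (metis ceiling_le_iff of_int_of_nat_eq of_int_le_iff of_nat_le_iff)
  have zero: "(1 - \<theta>) * graph_pt b c u n + \<theta> * graph_pt b c u (Suc n) = 0"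
    using assms(3) graphic_segment[of \<theta> b c u n] \<theta> unfolding \<theta>_def by (simp add: algebra_simps)
  show ?thesis
  proof (cases "0 \<le> graph_pt b c u (Suc n)")
    case True
    with \<open>Suc n \<le> k\<close> show ?thesis by auto
  next
    case False
    then have "0 < (1 - \<theta>) * graph_pt b c u n"
      using zero \<theta> mult_pos_neg[of \<theta> "graph_pt b c u (Suc n)"] by linarith
    then have "0 < graph_pt b c u n"
      using \<theta> by (simp add: zero_less_mult_iff)
    then have "n \<noteq> 0" by (metis graph_pt_0 less_irrefl)
    with \<open>0 < graph_pt b c u n\<close> \<open>Suc n \<le> k\<close> show ?thesis
      by (intro exI[of _ n]) simp
  qed
qed

text \<open>A sign change of the integer points forces a zero of the interpolating segment.\<close>
lemma graph_pt_neg_if_graphic_nonzero: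
  assumes nonzero: "\<forall>x. 0 < x \<and> x \<le> real k \<longrightarrow> graphic b c u x \<noteq> 0"
    and first: "graph_pt b c u 1 < 0"
    and "1 \<le> i" "i \<le> k"
  shows "graph_pt b c u i < 0"
  using assms(3,4)
proof (induction i)
  case (Suc j)
  show ?case
  proof (rule ccontr)
    assume "\<not> graph_pt b c u (Suc j) < 0"
    then have y1: "0 \<le> graph_pt b c u (Suc j)" by simp
    have "j \<noteq> 0" using first y1 by (cases j) auto
    then have y0: "graph_pt b c u j < 0"
      using Suc by simp
    define \<theta> where "\<theta> = - graph_pt b c u j / (graph_pt b c u (Suc j) - graph_pt b c u j)"
    have \<theta>: "0 < \<theta>" "\<theta> \<le> 1"
      using y0 y1 unfolding \<theta>_def by (auto simp: field_simps)
    have "graphic b c u (real j + \<theta>) = 0"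
      using graphic_segment[of \<theta> b c u j] \<theta> y0 y1 unfolding \<theta>_def by (simp add: field_simps)
    moreover have "0 < real j + \<theta>" "real j + \<theta> \<le> real k"
      using \<theta> Suc.prems by linarith+
    ultimately show False
      using nonzero by blast
  qed
qed simp

section \<open>Walks of binary words\<close>

lemma frequently_sequentially_compose:
  assumes "\<And>m. m \<le> f m" and "\<exists>\<^sub>F m in sequentially. P (f m)"
  shows "\<exists>\<^sub>F n in sequentially. P n"
  using assms unfolding frequently_sequentially by (meson le_trans)

locale binary_walk =
  fixes w :: "nat \<Rightarrow> nat" and b c :: int
  assumes letter: "w n = 0 \<or> w n = 1"
    and b_pos: "0 < b" and c_pos: "0 < c"
begin

definition step :: "nat \<Rightarrow> int" where
  "step x = (if x = 1 then c else - b)"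

text \<open>\<open>walk n\<close> is the graphic of \<open>w\<close> at \<open>n\<close> for \<open>v\<^sub>0 = (1, -b)\<close>, \<open>v\<^sub>1 = (1, c)\<close>.\<close>
definition walk :: "nat \<Rightarrow> int" where
  "walk n = (\<Sum>i<n. step (w i))"

lemma walk_0 [simp]: "walk 0 = 0"
  by (simp add: walk_def)

lemma walk_Suc: "walk (Suc n) = walk n + step (w n)"
  by (simp add: walk_def)

lemma walk_add: "walk (m + j) = walk m + (\<Sum>i<j. step (w (m + i)))"
  by (induction j) (simp_all add: walk_Suc)

lemma set_map_letters: "set (map w xs) \<subseteq> {0, 1}"
  using letter by (metis image_subset_iff insert_iff set_map)

lemma sum_list_step: "set u \<subseteq> {0, 1} \<Longrightarrow> sum_list (map step u) = c * cnt 1 u - b * cnt 0 u"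
  by (induction u) (auto simp: step_def algebra_simps)

lemma walk_diff:
  assumes "p \<le> q"
  shows "walk q - walk p = c * cnt 1 (map w [p..<q]) - b * cnt 0 (map w [p..<q])"
proof -
  have "walk q - walk p = (\<Sum>i<q - p. step (w (p + i)))"
    using walk_add[of p "q - p"] assms by simp
  also have "\<dots> = sum_list (map step (map w [p..<q]))"
    by (simp add: sum_list_sum_nth lessThan_atLeast0 add.commute)
  also have "\<dots> = c * cnt 1 (map w [p..<q]) - b * cnt 0 (map w [p..<q])"
    by (intro sum_list_step set_map_letters)
  finally show ?thesis .
qed

lemma rho_block:
  assumes "p < q"
  shows "(b + c) * rho 1 (map w [p..<q]) = (walk q - walk p) / real (q - p) + b"
    and "rho 0 (map w [p..<q]) = 1 - rho 1 (map w [p..<q])"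
proof -
  let ?u = "map w [p..<q]"
  have len: "real (cnt 0 ?u) + real (cnt 1 ?u) = real (q - p)"
    using cnt_0_add_cnt_1[OF set_map_letters] by (metis length_map length_upt of_nat_add)
  have pos: "real (q - p) > 0"
    using assms by simp
  have "real_of_int (walk q - walk p) = c * real (cnt 1 ?u) - b * real (cnt 0 ?u)"
    using walk_diff[of p q] assms by simp
  also have "\<dots> = (b + c) * real (cnt 1 ?u) - b * (real (cnt 0 ?u) + real (cnt 1 ?u))"
    by (simp add: algebra_simps)
  also have "\<dots> = (b + c) * real (cnt 1 ?u) - b * real (q - p)"
    by (simp only: len)
  finally show "(b + c) * rho 1 ?u = (walk q - walk p) / real (q - p) + b"
    using pos by (simp add: rho_def field_simps)
  show "rho 0 ?u = 1 - rho 1 ?u"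
    using len pos by (simp add: rho_def field_simps)
qed

lemma wap_if_frequently_level:
  assumes "\<exists>\<^sub>F n in sequentially. walk n = v"
  shows "weak_abelian_periodic w"
proof -
  have "infinite {n. walk n = v}"
    using assms frequently_cofinite[of "\<lambda>n. walk n = v"] by (simp add: cofinite_eq_sequentially)
  then obtain p :: "nat \<Rightarrow> nat" where p: "strict_mono p" "\<And>i. walk (p i) = v"
    using infinite_enumerate by blast
  have blk: "p i < p (Suc i)" for i
    using p(1) by (simp add: strict_mono_def)
  have "real_of_int b + real_of_int c \<noteq> 0"
    using b_pos c_pos by linarith
  then have rho1: "rho 1 (map w [p i..<p (Suc i)]) = b / (b + c)" for i
    using rho_block(1)[OF blk[of i]] p(2) by (simp add: eq_divide_eq algebra_simps)
  have "rho a (map w [p i..<p (Suc i)]) = rho a (map w [p j..<p (Suc j)])" if "a \<in> {0, 1}" for a i j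
    using that rho1 rho_block(2)[OF blk] by auto
  with p(1) show ?thesis
    unfolding weak_abelian_periodic_def by blast
qed

text \<open>The walk descends in steps of size \<open>b\<close>, so each downcrossing of level \<open>L\<close> leaves from
  one of the finitely many levels in \<open>[L, L + b)\<close>.\<close>
lemma wap_if_crossing:
  assumes "\<exists>\<^sub>F n in sequentially. L \<le> walk n" and "\<exists>\<^sub>F n in sequentially. walk n < L"
  shows "weak_abelian_periodic w"
proof -
  have "\<exists>n\<ge>N. walk n \<in> {L..<L + b}" for N
  proof -
    obtain n1 where n1: "N \<le> n1" "L \<le> walk n1"
      using assms(1) by (auto simp: frequently_sequentially)
    obtain n2 where n2: "n1 \<le> n2" "walk n2 < L"
      using assms(2) by (auto simp: frequently_sequentially)
    have "\<exists>n. n1 \<le> n \<and> L \<le> walk n \<and> walk (Suc n) < L"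
      using n2
    proof (induction n2)
      case (Suc m)
      show ?case
      proof (cases "L \<le> walk m")
        case True
        with Suc.prems n1 show ?thesis by (metis le_SucE not_le)
      next
        case False
        with Suc n1 show ?thesis by (metis le_SucE not_le)
      qed
    qed (use n1 in simp)
    then obtain n where "N \<le> n" "L \<le> walk n" "walk (Suc n) < L"
      using n1(1) le_trans by blast
    moreover have "walk (Suc n) = walk n - b"
      using \<open>L \<le> walk n\<close> \<open>walk (Suc n) < L\<close> c_pos by (auto simp: walk_Suc step_def split: if_splits)
    ultimately show ?thesis by auto
  qed
  then have "\<exists>\<^sub>F n in sequentially. \<exists>v\<in>{L..<L + b}. walk n = v"
    by (simp add: frequently_sequentially)
  then have "\<exists>v\<in>{L..<L + b}. \<exists>\<^sub>F n in sequentially. walk n = v"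
    by (rule frequently_bex_finite[OF finite_atLeastLessThan_int])
  then obtain v where "\<exists>\<^sub>F n in sequentially. walk n = v"
    by blast
  then show ?thesis
    by (rule wap_if_frequently_level)
qed

lemma walk_along_wap_partition:
  fixes r :: real
  assumes p: "strict_mono p" and r: "\<And>i. rho 1 (map w [p i..<p (Suc i)]) = r"
  shows "walk (p i) = walk (p 0) + ((b + c) * r - b) * (real (p i) - real (p 0))"
proof (induction i)
  case (Suc i)
  have lt: "p i < p (Suc i)"
    using p by (simp add: strict_mono_def)
  have "walk (p (Suc i)) - walk (p i) = ((b + c) * r - b) * (real (p (Suc i)) - real (p i))"
    using rho_block(1)[OF lt] r[of i] lt by (simp add: of_nat_diff field_simps)
  with Suc show ?case
    by (simp add: algebra_simps)
qed simp

text \<open>Along a weak abelian decomposition the walk is affine in the position, so a walk that is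
  sublinear must be constant there; a walk tending to \<open>-\<infinity>\<close> cannot be.\<close>
lemma not_wap_if_sublinear_divergent:
  assumes bot: "filterlim walk at_bot sequentially"
    and sublinear: "(\<lambda>n. walk n / real n) \<longlonglongrightarrow> 0"
  shows "\<not> weak_abelian_periodic w"
proof
  assume "weak_abelian_periodic w"
  then obtain p where p: "strict_mono p"
    and eq: "\<And>i j. rho 1 (map w [p i..<p (Suc i)]) = rho 1 (map w [p j..<p (Suc j)])"
    unfolding weak_abelian_periodic_def by blast
  define s where "s = (b + c) * rho 1 (map w [p 0..<p (Suc 0)]) - b"
  define C where "C = walk (p 0) - s * real (p 0)"
  have lin: "walk (p i) = C + s * real (p i)" for i
    using walk_along_wap_partition[OF p eq[of _ 0]] unfolding s_def C_def by (simp add: algebra_simps)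
  have "(\<lambda>i. walk (p i) / real (p i) - C / real (p i)) \<longlonglongrightarrow> 0 - 0"
    using LIMSEQ_subseq_LIMSEQ[OF sublinear p] LIMSEQ_subseq_LIMSEQ[OF lim_const_over_n p]
    by (intro tendsto_diff) (simp_all add: o_def)
  moreover have "\<forall>\<^sub>F i in sequentially. walk (p i) / real (p i) - C / real (p i) = s"
  proof (rule eventually_sequentiallyI)
    fix i :: nat assume "1 \<le> i"
    then have "0 < p i"
      using strict_mono_imp_increasing[OF p, of i] by simp
    then show "walk (p i) / real (p i) - C / real (p i) = s"
      using lin[of i] by (simp add: field_simps)
  qed
  ultimately have "(\<lambda>i. s) \<longlonglongrightarrow> 0"
    by (simp add: Lim_transform_eventually)
  then have "s = 0"
    by (simp add: LIMSEQ_const_iff)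
  then have const: "walk (p i) = walk (p 0)" for i
    using lin[of i] lin[of 0] by simp
  obtain N where "\<And>n. n \<ge> N \<Longrightarrow> walk n \<le> walk (p 0) - 1"
    using bot unfolding filterlim_at_bot eventually_sequentially by blast
  moreover have "N \<le> p N"
    using strict_mono_imp_increasing[OF p] .
  ultimately show False
    using const[of N] by force
qed

end

section \<open>Fixed points of uniform morphisms\<close>

locale uniform_fixed_point =
  fixes k :: nat and f0 f1 :: "nat list" and w :: "nat \<Rightarrow> nat"
  assumes bin0: "binword f0" and bin1: "binword f1"
    and unif: "uniform_morph k f0 f1"
    and prim: "primitive_morph f0 f1"
    and start: "f0 \<noteq> [] \<and> hd f0 = 0"
    and fix_w: "\<forall>n i. i < length ((morph f0 f1 ^^ n) [0]) \<longrightarrow> w i = (morph f0 f1 ^^ n) [0] ! i"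
begin

definition phi :: "nat \<Rightarrow> nat list" where
  "phi x = (if x = 0 then f0 else f1)"

definition b :: int where "b = int (cnt 1 f0)"
definition c :: int where "c = int (cnt 0 f1)"

text \<open>In the paper's notation \<open>lam = a - c\<close>; it is the factor by which \<open>\<phi>\<close> scales the walk.\<close>
definition lam :: int where "lam = int (cnt 0 f0) - int (cnt 0 f1)"

lemma length_phi: "length (phi x) = k"
  using unif by (simp add: phi_def uniform_morph_def)

lemma set_phi: "set (phi x) \<subseteq> {0, 1}"
  using bin0 bin1 by (simp add: phi_def binword_def)

lemma length_iterate: "length ((morph f0 f1 ^^ m) [0]) = k ^ m"
  using unif by (induction m) (auto simp: length_morph uniform_morph_def)

lemma set_iterate: "set ((morph f0 f1 ^^ m) [0]) \<subseteq> {0, 1}"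
proof (cases m)
  case (Suc m')
  have "set f0 \<union> set f1 \<subseteq> {0, 1}"
    using bin0 bin1 by (simp add: binword_def)
  with Suc show ?thesis
    using order_trans[OF set_morph_subset] by simp
qed simp

lemma one_in_f0: "1 \<in> set f0"
proof (rule ccontr)
  assume "1 \<notin> set f0"
  then have "set (if (0::nat) = 0 then f0 else f1) \<subseteq> {0}"
    using bin0 by (auto simp: binword_def)
  from set_funpow_morph_subset_singleton[OF this] prim show False
    by (auto simp: primitive_morph_def)
qed

lemma zero_in_f1: "0 \<in> set f1"
proof (rule ccontr)
  assume "0 \<notin> set f1"
  then have "set (if (1::nat) = 0 then f0 else f1) \<subseteq> {1}"
    using bin1 by (auto simp: binword_def)
  from set_funpow_morph_subset_singleton[OF this] prim show False
    by (auto simp: primitive_morph_def)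
qed

lemma b_pos: "0 < b"
  using one_in_f0 by (simp add: b_def cnt_pos_iff)

lemma c_pos: "0 < c"
  using zero_in_f1 by (simp add: c_def cnt_pos_iff)

lemma cnt_f0: "int (cnt 0 f0) + b = int k" and cnt_f1: "c + int (cnt 1 f1) = int k"
  using cnt_0_add_cnt_1[OF set_phi[of 0]] cnt_0_add_cnt_1[OF set_phi[of 1]]
    length_phi[of 0] length_phi[of 1]
  by (simp_all add: phi_def b_def c_def flip: of_nat_add)

lemma k_ge_2: "2 \<le> k"
proof -
  have "0 \<in> set f0"
    using start by (cases f0) auto
  then show ?thesis
    using cnt_f0 b_pos cnt_pos_iff[of 0 f0] by linarith
qed

lemma lam_less_k: "lam < int k"
  using cnt_f0 b_pos by (simp add: lam_def)

lemma less_power_k: "n < k ^ n"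
  using less_exp[of n] power_mono[OF k_ge_2, of n] by linarith

lemma w_iterate: "i < k ^ m \<Longrightarrow> w i = (morph f0 f1 ^^ m) [0] ! i"
  using fix_w length_iterate by auto

lemma w_letter: "w n = 0 \<or> w n = 1"
proof -
  have "w n \<in> set ((morph f0 f1 ^^ n) [0])"
    using w_iterate[OF less_power_k] length_iterate less_power_k by simp
  then show ?thesis
    using set_iterate by auto
qed

sublocale binary_walk w b c
  using w_letter b_pos c_pos by unfold_locales

lemma w_block: "j < k \<Longrightarrow> w (k * n + j) = phi (w n) ! j"
proof -
  assume j: "j < k"
  let ?u = "(morph f0 f1 ^^ n) [0]"
  have n: "n < length ?u"
    using less_power_k length_iterate by simp
  have "k * n + j < k * Suc n"
    using j by simp
  also have "\<dots> \<le> k ^ Suc n"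
    using less_power_k[of n] by (simp only: power_Suc Suc_le_eq mult_le_mono2)
  finally have "w (k * n + j) = (morph f0 f1 ^^ Suc n) [0] ! (k * n + j)"
    by (rule w_iterate)
  also have "\<dots> = morph f0 f1 ?u ! (k * n + j)"
    by simp
  also have "\<dots> = phi (?u ! n) ! j"
    using nth_morph[OF _ _ n j] unif by (simp add: uniform_morph_def phi_def)
  also have "?u ! n = w n"
    using w_iterate[OF less_power_k] by simp
  finally show ?thesis .
qed

lemma w_0: "w 0 = 0"
  using w_iterate[of 0 0] by simp

lemma w_prefix: "j < k \<Longrightarrow> w j = f0 ! j"
  using w_block[of j 0] w_0 by (simp add: phi_def)

definition phi_walk :: "nat \<Rightarrow> nat \<Rightarrow> int" where
  "phi_walk x j = sum_list (map step (take j (phi x)))"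

lemma phi_walk_0 [simp]: "phi_walk x 0 = 0"
  by (simp add: phi_walk_def)

lemma phi_walk_Suc: "j < k \<Longrightarrow> phi_walk x (Suc j) = phi_walk x j + step (phi x ! j)"
  using length_phi by (simp add: phi_walk_def take_Suc_conv_app_nth)

lemma phi_walk_full:
  assumes "x = 0 \<or> x = 1"
  shows "phi_walk x k = lam * step x"
proof -
  have full: "phi_walk y k = c * int (cnt 1 (phi y)) - b * int (cnt 0 (phi y))" for y
    using sum_list_step[OF set_phi] length_phi by (simp add: phi_walk_def)
  have "phi_walk 0 k = c * b - b * (lam + c)"
    using full[of 0] unfolding phi_def b_def c_def lam_def by (simp add: algebra_simps)
  moreover have "int (cnt 1 f1) = lam + b"
    using cnt_f0 cnt_f1 by (simp add: lam_def c_def)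
  then have "phi_walk 1 k = c * (lam + b) - b * c"
    using full[of 1] unfolding phi_def c_def by simp
  ultimately show ?thesis
    using assms by (auto simp: step_def algebra_simps)
qed

lemma graph_pt_phi: "graph_pt (real (cnt 1 f0)) (real (cnt 0 f1)) (phi x) j = phi_walk x j"
proof -
  have "phi_walk x j = c * cnt 1 (take j (phi x)) - b * cnt 0 (take j (phi x))"
    unfolding phi_walk_def by (rule sum_list_step[OF order_trans[OF set_take_subset set_phi]])
  then show ?thesis
    by (simp add: graph_pt_def b_def c_def)
qed

lemma sum_step_block: "j \<le> k \<Longrightarrow> (\<Sum>i<j. step (w (k * n + i))) = phi_walk (w n) j"
proof (induction j)
  case (Suc j)
  then show ?case
    using phi_walk_Suc[of j "w n"] w_block[of j n] by simp
qed simp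

lemma walk_mult_k: "walk (k * n) = lam * walk n"
proof (induction n)
  case (Suc n)
  have "walk (k * Suc n) = walk (k * n) + phi_walk (w n) k"
    using walk_add[of "k * n" k] sum_step_block[of k n] by (simp add: add.commute)
  with Suc phi_walk_full[OF w_letter] show ?case
    by (simp add: walk_Suc algebra_simps)
qed simp

lemma walk_block: "j \<le> k \<Longrightarrow> walk (k * n + j) = lam * walk n + phi_walk (w n) j"
  using walk_add[of "k * n" j] sum_step_block[of j n] walk_mult_k by simp

lemma walk_prefix: "j \<le> k \<Longrightarrow> walk j = phi_walk 0 j"
  using walk_block[of j 0] w_0 by simp

lemma walk_power_mult: "walk (k ^ m * n) = lam ^ m * walk n"
  by (induction m) (simp_all add: walk_mult_k mult.assoc)

lemma walk_power: "walk (k ^ m) = - b * lam ^ m"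
  using walk_power_mult[of m 1] w_0 by (simp add: walk_Suc step_def)

lemma le_power_k_mult:
  assumes "1 \<le> i"
  shows "m \<le> k ^ m * i"
proof -
  have "k ^ m * 1 \<le> k ^ m * i"
    by (rule mult_le_mono2[OF assms])
  then show ?thesis
    using less_power_k[of m] by linarith
qed

section \<open>Periodicity criteria for the fixed point\<close>

lemma frequently_walk_below:
  assumes "2 \<le> lam"
  shows "\<exists>\<^sub>F n in sequentially. walk n < L"
proof (rule frequently_sequentially_compose[of "\<lambda>m. k ^ m"])
  show "m \<le> k ^ m" for m
    using le_power_k_mult[of 1 m] by simp
  have "walk (k ^ m) < L" if "nat (1 - L) \<le> m" for m
  proof -
    have "int m < int (2 ^ m)"
      using less_exp[of m] by (simp only: of_nat_less_iff)
    also have "\<dots> = 2 ^ m"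
      by simp
    also have "\<dots> \<le> lam ^ m"
      using assms by (intro power_mono) auto
    also have "\<dots> \<le> b * lam ^ m"
      using b_pos assms by (simp add: mult_le_cancel_right1)
    finally show ?thesis
      using that walk_power[of m] by simp
  qed
  then show "\<exists>\<^sub>F m in sequentially. walk (k ^ m) < L"
    by (intro eventually_frequently eventually_sequentiallyI) auto
qed

lemma wap_if_lam_le_1:
  assumes "lam \<le> 1"
  shows "weak_abelian_periodic w"
proof -
  have le_power: "m \<le> k ^ m" for m
    using le_power_k_mult[of 1 m] by simp
  consider "lam < 0" | "lam = 0" | "lam = 1"
    using assms by linarith
  then show ?thesis
  proof cases
    case 1
    have pos: "0 < lam ^ (2 * m)" for m
      using 1 by (simp add: power_mult)
    have even: "walk (k ^ (2 * m)) < 0" for m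
      using walk_power[of "2 * m"] mult_pos_pos[OF b_pos pos[of m]] by simp
    have "lam ^ Suc (2 * m) < 0" for m
      using mult_neg_pos[OF 1 pos[of m]] by simp
    then have odd: "0 \<le> walk (k ^ Suc (2 * m))" for m
      using walk_power[of "Suc (2 * m)"] mult_pos_neg[OF b_pos] by (simp add: less_imp_le)
    have "\<exists>\<^sub>F m in sequentially. 0 \<le> walk (k ^ m)"
      unfolding frequently_sequentially using odd by (metis le_SucI le_add2 mult_2)
    moreover have "\<exists>\<^sub>F m in sequentially. walk (k ^ m) < 0"
      unfolding frequently_sequentially using even by (metis le_add2 mult_2)
    ultimately show ?thesis
      using frequently_sequentially_compose[OF le_power, where P = "\<lambda>n. 0 \<le> walk n"]
        frequently_sequentially_compose[OF le_power, where P = "\<lambda>n. walk n < 0"]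
      by (intro wap_if_crossing) simp_all
  next
    case 2
    then have "\<exists>\<^sub>F m in sequentially. walk (k ^ m) = 0"
      using walk_power by (intro eventually_frequently eventually_sequentiallyI[of 1]) auto
    then show ?thesis
      using frequently_sequentially_compose[OF le_power, where P = "\<lambda>n. walk n = 0"]
      by (intro wap_if_frequently_level) simp
  next
    case 3
    then have "\<exists>\<^sub>F m in sequentially. walk (k ^ m) = - b"
      using walk_power by (intro eventually_frequently always_eventually) auto
    then show ?thesis
      using frequently_sequentially_compose[OF le_power, where P = "\<lambda>n. walk n = - b"]
      by (intro wap_if_frequently_level) simp
  qed
qed

lemma wap_if_nonneg_walk:
  assumes "1 \<le> lam" "1 \<le> i" "0 \<le> walk i"
  shows "weak_abelian_periodic w"
proof (rule wap_if_crossing)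
  have "0 \<le> walk (k ^ m * i)" for m
    using assms walk_power_mult[of m i] by simp
  then have "\<exists>\<^sub>F m in sequentially. 0 \<le> walk (k ^ m * i)"
    by (simp add: eventually_frequently)
  then show "\<exists>\<^sub>F n in sequentially. 0 \<le> walk n"
    by (rule frequently_sequentially_compose[OF le_power_k_mult[OF assms(2)]])
  have "walk (k ^ m) < 0" for m
    using assms(1) b_pos walk_power[of m] by simp
  then have "\<exists>\<^sub>F m in sequentially. walk (k ^ m) < 0"
    by (simp add: eventually_frequently)
  then show "\<exists>\<^sub>F n in sequentially. walk n < 0"
    using frequently_sequentially_compose[of "\<lambda>m. k ^ m"] le_power_k_mult[of 1] by simp
qed

definition one_positions :: "nat \<Rightarrow> nat set" where
  "one_positions x = {i. 1 \<le> i \<and> i \<le> k \<and> phi x ! (i - 1) = 1}"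

definition peak :: "nat \<Rightarrow> int" where
  "peak x = Max (phi_walk x ` one_positions x)"

lemma finite_one_positions: "finite (one_positions x)"
  by (rule finite_subset[of _ "{..k}"]) (auto simp: one_positions_def)

lemma phi_walk_le_peak: "i \<in> one_positions x \<Longrightarrow> phi_walk x i \<le> peak x"
  unfolding peak_def using finite_one_positions by simp

lemma peak_attained:
  assumes "1 \<in> set (phi x)"
  obtains i where "i \<in> one_positions x" "phi_walk x i = peak x"
proof -
  obtain i where "i < length (phi x)" "phi x ! i = 1"
    using assms by (metis in_set_conv_nth)
  then have "Suc i \<in> one_positions x"
    using length_phi by (simp add: one_positions_def)
  then have "phi_walk x ` one_positions x \<noteq> {}"
    by blast
  then have "peak x \<in> phi_walk x ` one_positions x"
    unfolding peak_def using finite_one_positions by (intro Max_in) simp_all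
  then obtain j where "j \<in> one_positions x" "peak x = phi_walk x j"
    by (rule imageE)
  with that show ?thesis
    by simp
qed

text \<open>Between two occurrences of \<open>1\<close> the walk only descends.\<close>
lemma phi_walk_le_max_peak: "j \<le> k \<Longrightarrow> phi_walk x j \<le> max 0 (peak x)"
proof (induction j)
  case (Suc j)
  show ?case
  proof (cases "phi x ! j = 1")
    case True
    with Suc.prems phi_walk_le_peak[of "Suc j" x] show ?thesis by (simp add: one_positions_def)
  next
    case False
    with Suc b_pos show ?thesis by (simp add: phi_walk_Suc step_def)
  qed
qed simp

lemma one_in_f1:
  assumes "1 \<le> lam"
  shows "1 \<in> set f1"
proof -
  have "0 < int (cnt 1 f1)"
    using assms cnt_f0 cnt_f1 b_pos unfolding lam_def c_def by linarith
  then show ?thesis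
    by (simp flip: cnt_pos_iff)
qed

lemma phi_walk_1_le_peak:
  assumes "1 \<le> lam" "j \<le> k"
  shows "phi_walk 1 j \<le> peak 1"
proof -
  have "0 < lam * step 1"
    using assms(1) c_pos by (simp add: step_def)
  then have "0 < max 0 (peak 1)"
    using phi_walk_full[of 1] phi_walk_le_max_peak[of k 1] by simp
  then have "max 0 (peak 1) = peak 1"
    by (simp add: max_def split: if_splits)
  with phi_walk_le_max_peak[OF assms(2), of 1] show ?thesis
    by simp
qed

lemma peak_0_neg:
  assumes "\<And>j. 1 \<le> j \<Longrightarrow> j \<le> k \<Longrightarrow> phi_walk 0 j < 0"
  shows "peak 0 < 0"
proof -
  obtain i where "i \<in> one_positions 0" "phi_walk 0 i = peak 0"
    using peak_attained[of 0] one_in_f0 by (auto simp: phi_def)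
  with assms[of i] show ?thesis
    by (simp add: one_positions_def)
qed

text \<open>If the criterion holds, the positions \<open>n' = k (n - 1) + i\<^sub>1\<close>, where \<open>i\<^sub>1\<close> realises
  \<open>peak 1\<close>, again end with a \<open>1\<close> and do not lower the walk below \<open>peak 0\<close>.\<close>
lemma wap_if_criterion:
  assumes lam: "2 \<le> lam" and crit: "peak 0 \<le> lam * (peak 0 - c) + peak 1"
  shows "weak_abelian_periodic w"
proof -
  obtain i0 where "i0 \<in> one_positions 0" "phi_walk 0 i0 = peak 0"
    using peak_attained[of 0] one_in_f0 by (auto simp: phi_def)
  then have i0: "1 \<le> i0" "i0 \<le> k" "f0 ! (i0 - 1) = 1" "phi_walk 0 i0 = peak 0"
    by (simp_all add: one_positions_def phi_def)
  obtain i1 where "i1 \<in> one_positions 1" "phi_walk 1 i1 = peak 1"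
    using peak_attained[of 1] one_in_f1 lam by (auto simp: phi_def)
  then have i1: "1 \<le> i1" "i1 \<le> k" "f1 ! (i1 - 1) = 1" "phi_walk 1 i1 = peak 1"
    by (simp_all add: one_positions_def phi_def)
  define pos where "pos j = ((\<lambda>n. k * (n - 1) + i1) ^^ j) i0" for j
  have "2 \<le> pos j \<and> j \<le> pos j \<and> w (pos j - 1) = 1 \<and> peak 0 \<le> walk (pos j)" for j
  proof (induction j)
    case 0
    have "i0 \<noteq> 1"
      using i0(3) start by (cases f0) auto
    with i0 show ?case
      using w_prefix[of "i0 - 1"] walk_prefix[of i0] by (simp add: pos_def)
  next
    case (Suc j)
    let ?n = "pos j"
    have next_pos: "pos (Suc j) = k * (?n - 1) + i1"
      by (simp add: pos_def)
    have "2 * (?n - 1) \<le> k * (?n - 1)"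
      using k_ge_2 by simp
    then have "Suc ?n \<le> pos (Suc j)"
      using Suc.IH i1(1) next_pos by linarith
    moreover have "w (pos (Suc j) - 1) = 1"
      using w_block[of "i1 - 1" "?n - 1"] i1 Suc.IH next_pos by (simp add: phi_def)
    moreover have "walk ?n = walk (?n - 1) + c"
      using walk_Suc[of "?n - 1"] Suc.IH by (simp add: step_def)
    then have "walk (pos (Suc j)) = lam * (walk ?n - c) + peak 1"
      using walk_block[OF i1(2), of "?n - 1"] Suc.IH i1(4) next_pos by simp
    then have "lam * (peak 0 - c) + peak 1 \<le> walk (pos (Suc j))"
      using Suc.IH lam by (simp add: mult_left_mono)
    ultimately show ?case
      using Suc.IH crit by simp
  qed
  then have "\<exists>\<^sub>F n in sequentially. peak 0 \<le> walk n"
    unfolding frequently_sequentially by blast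
  then show ?thesis
    using wap_if_crossing frequently_walk_below[OF lam] by blast
qed

section \<open>Failure of the criterion\<close>

lemma walk_block_descent:
  fixes L :: int
  assumes lam: "2 \<le> lam" and neg: "\<And>j. 1 \<le> j \<Longrightarrow> j \<le> k \<Longrightarrow> phi_walk 0 j < 0"
    and fails: "lam * (peak 0 - c) + peak 1 < peak 0"
    and L: "0 \<le> L" and j: "1 \<le> j" "j \<le> k"
    and below: "walk m \<le> -1 - L" and below_one: "w m = 1 \<Longrightarrow> walk (Suc m) \<le> peak 0 - L"
  shows "walk (k * m + j) \<le> -2 - L \<and> (w (k * m + j - 1) = 1 \<longrightarrow> walk (k * m + j) \<le> peak 0 - 1 - L)"
proof -
  have block: "walk (k * m + j) = lam * walk m + phi_walk (w m) j"
    using walk_block[OF j(2)] .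
  have last: "w (k * m + j - 1) = phi (w m) ! (j - 1)"
    using w_block[of "j - 1" m] j by simp
  have "L \<le> lam * L"
    using lam L by (simp add: mult_le_cancel_right1)
  have A: "peak 0 < 0"
    using peak_0_neg neg by blast
  show ?thesis
  proof (cases "w m = 0")
    case True
    have "lam * walk m \<le> lam * (-1 - L)"
      using below lam by (simp add: mult_left_mono)
    moreover have "phi_walk 0 j \<le> -1"
      using neg j by fastforce
    moreover have "phi_walk 0 j \<le> peak 0" if "f0 ! (j - 1) = 1"
      using phi_walk_le_peak[of j 0] that j by (simp add: one_positions_def phi_def)
    moreover have "walk (k * m + j) = lam * walk m + phi_walk 0 j" "w (k * m + j - 1) = f0 ! (j - 1)"
      using True block last by (simp_all add: phi_def)
    ultimately show ?thesis
      using \<open>L \<le> lam * L\<close> lam by (auto simp: algebra_simps)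
  next
    case False
    then have "w m = 1"
      using w_letter by metis
    then have "walk m \<le> peak 0 - L - c"
      using below_one walk_Suc[of m] by (simp add: step_def)
    then have "lam * walk m \<le> lam * (peak 0 - c) - lam * L"
      using lam mult_left_mono[of "walk m" "peak 0 - L - c" lam] by (simp add: algebra_simps)
    moreover have "phi_walk 1 j \<le> peak 1"
      using phi_walk_1_le_peak lam j by simp
    ultimately show ?thesis
      using \<open>w m = 1\<close> block fails A \<open>L \<le> lam * L\<close> by simp
  qed
qed

text \<open>The least position that needs \<open>L\<close> steps of \<open>n \<mapsto> (n - 1) div k\<close> to reach \<open>[1, k]\<close>.\<close>
definition level_start :: "nat \<Rightarrow> nat" where
  "level_start L = ((\<lambda>n. k * n + 1) ^^ L) 1"

lemma level_start_0 [simp]: "level_start 0 = 1"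
  by (simp add: level_start_def)

lemma level_start_Suc: "level_start (Suc L) = k * level_start L + 1"
  by (simp add: level_start_def)

lemma level_start_pos: "1 \<le> level_start L"
  by (induction L) (simp_all add: level_start_Suc)

lemma level_start_Suc_gt: "k < level_start (Suc L)"
proof -
  have "k * 1 \<le> k * level_start L"
    by (rule mult_le_mono2[OF level_start_pos])
  then show ?thesis
    using level_start_Suc[of L] by linarith
qed

lemma level_start_pred_le_div:
  assumes "level_start L \<le> n" "k < n"
  shows "level_start (L - 1) \<le> (n - 1) div k"
proof (cases L)
  case 0
  with assms(2) k_ge_2 show ?thesis
    by (simp add: Suc_le_eq div_greater_zero_iff)
next
  case (Suc L')
  then have "level_start L' * k \<le> n - 1"
    using assms(1) level_start_Suc[of L'] by (simp add: mult.commute)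
  with Suc k_ge_2 show ?thesis
    by (simp add: less_eq_div_iff_mult_less_eq)
qed

lemma walk_prefix_bound:
  assumes neg: "\<And>j. 1 \<le> j \<Longrightarrow> j \<le> k \<Longrightarrow> phi_walk 0 j < 0" and "1 \<le> n" "n \<le> k"
  shows "walk n \<le> -1 \<and> (w (n - 1) = 1 \<longrightarrow> walk n \<le> peak 0)"
proof -
  have "walk n = phi_walk 0 n" "w (n - 1) = f0 ! (n - 1)"
    using walk_prefix w_prefix assms(2,3) by simp_all
  moreover have "f0 ! (n - 1) = 1 \<Longrightarrow> phi_walk 0 n \<le> peak 0"
    using phi_walk_le_peak[of n 0] assms(2,3) by (simp add: one_positions_def phi_def)
  ultimately show ?thesis
    using neg[OF assms(2,3)] by simp
qed

lemma walk_bound_from_level_start: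
  assumes lam: "2 \<le> lam" and neg: "\<And>j. 1 \<le> j \<Longrightarrow> j \<le> k \<Longrightarrow> phi_walk 0 j < 0"
    and fails: "lam * (peak 0 - c) + peak 1 < peak 0"
    and "level_start L \<le> n"
  shows "walk n \<le> -1 - int L \<and> (w (n - 1) = 1 \<longrightarrow> walk n \<le> peak 0 - int L)"
  using assms(4)
proof (induction n arbitrary: L rule: less_induct)
  case (less n)
  have "1 \<le> n"
    using less.prems level_start_pos[of L] by linarith
  show ?case
  proof (cases "n \<le> k")
    case True
    then have "L = 0"
      using less.prems level_start_Suc_gt[of "L - 1"] by (cases L) auto
    with walk_prefix_bound[OF neg \<open>1 \<le> n\<close> True] show ?thesis
      by simp
  next
    case False
    define m where "m = (n - 1) div k"
    define j where "j = (n - 1) mod k + 1"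
    have n: "n = k * m + j" and j: "1 \<le> j" "j \<le> k"
      using \<open>1 \<le> n\<close> k_ge_2 unfolding m_def j_def by (simp_all add: Suc_leI)
    have m: "level_start (L - 1) \<le> m"
      using level_start_pred_le_div[OF less.prems] False unfolding m_def by simp
    moreover have "2 * m \<le> k * m"
      using k_ge_2 by simp
    ultimately have "Suc m < n"
      using n j level_start_pos[of "L - 1"] by linarith
    then have "walk m \<le> -1 - int (L - 1)" "w m = 1 \<Longrightarrow> walk (Suc m) \<le> peak 0 - int (L - 1)"
      using less.IH[of m "L - 1"] less.IH[of "Suc m" "L - 1"] m by simp_all
    then have "walk n \<le> -2 - int (L - 1) \<and> (w (n - 1) = 1 \<longrightarrow> walk n \<le> peak 0 - 1 - int (L - 1))"
      using walk_block_descent[OF lam neg fails _ j] n by simp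
    then show ?thesis
      by linarith
  qed
qed

lemma walk_tendsto_bot_if_criterion_fails:
  assumes "2 \<le> lam" and "\<And>j. 1 \<le> j \<Longrightarrow> j \<le> k \<Longrightarrow> phi_walk 0 j < 0"
    and "lam * (peak 0 - c) + peak 1 < peak 0"
  shows "filterlim walk at_bot sequentially"
  unfolding filterlim_at_bot eventually_sequentially
proof (intro allI exI impI)
  fix Z :: int and n
  assume "level_start (nat (- Z)) \<le> n"
  then have "walk n \<le> -1 - int (nat (- Z))"
    using walk_bound_from_level_start[OF assms] by blast
  then show "walk n \<le> Z"
    by linarith
qed

lemma abs_phi_walk_le: "j \<le> k \<Longrightarrow> \<bar>phi_walk x j\<bar> \<le> int j * (b + c)"
proof (induction j)
  case (Suc j)
  have "\<bar>phi_walk x (Suc j)\<bar> \<le> \<bar>phi_walk x j\<bar> + \<bar>step (phi x ! j)\<bar>"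
    using phi_walk_Suc[of j x] Suc.prems abs_triangle_ineq by simp
  moreover have "\<bar>step (phi x ! j)\<bar> \<le> b + c"
    using b_pos c_pos by (simp add: step_def)
  ultimately show ?case
    using Suc by (simp add: algebra_simps)
qed simp

lemma abs_walk_le:
  assumes lam: "2 \<le> lam" and "n < k ^ m"
  shows "\<bar>walk n\<bar> \<le> k * (b + c) * (lam ^ m - 1)"
  using assms(2)
proof (induction m arbitrary: n)
  case (Suc m)
  define q where "q = n div k"
  define j where "j = n mod k"
  have n: "n = k * q + j" and j: "j < k"
    using k_ge_2 unfolding q_def j_def by simp_all
  have "q < k ^ m"
    using Suc.prems unfolding q_def by (simp add: less_mult_imp_div_less mult.commute)
  then have IH: "\<bar>walk q\<bar> \<le> k * (b + c) * (lam ^ m - 1)"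
    by (rule Suc.IH)
  have "\<bar>walk n\<bar> \<le> lam * \<bar>walk q\<bar> + \<bar>phi_walk (w q) j\<bar>"
    using walk_block[of j q] j n lam abs_triangle_ineq[of "lam * walk q" "phi_walk (w q) j"]
    by (simp add: abs_mult)
  also have "\<dots> \<le> lam * (k * (b + c) * (lam ^ m - 1)) + k * (b + c)"
    using IH abs_phi_walk_le[of j "w q"] j lam b_pos c_pos
    by (intro add_mono mult_left_mono order_trans[OF _ mult_right_mono[of "int j" "int k"]]) auto
  also have "\<dots> = k * (b + c) * (lam ^ Suc m - 1) - k * (b + c) * (lam - 2)"
    by (simp add: algebra_simps)
  also have "\<dots> \<le> k * (b + c) * (lam ^ Suc m - 1)"
    using lam b_pos c_pos by simp
  finally show ?case .
qed simp

text \<open>The exponent \<open>log\<^sub>k lam\<close> is below \<open>1\<close> because \<open>lam < k\<close>.\<close>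
lemma abs_walk_le_powr:
  assumes lam: "2 \<le> lam" and n: "1 \<le> n"
  shows "\<bar>walk n\<bar> \<le> k * (b + c) * lam * real n powr log k lam"
proof -
  define \<alpha> where "\<alpha> = log (real k) (real_of_int lam)"
  have k: "1 < real k"
    using k_ge_2 by simp
  obtain M where M: "k ^ M \<le> n" "n < k ^ (M + 1)"
    using ex_power_ivl1[OF k_ge_2 n] by blast
  have "\<bar>walk n\<bar> \<le> k * (b + c) * (lam ^ (M + 1) - 1)"
    using abs_walk_le[OF lam M(2)] .
  also have "\<dots> \<le> k * (b + c) * lam * lam ^ M"
    using b_pos c_pos by (simp add: algebra_simps)
  finally have "real_of_int \<bar>walk n\<bar> \<le> real_of_int (k * (b + c) * lam * lam ^ M)"
    by (simp only: of_int_le_iff)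
  also have "\<dots> = k * (b + c) * lam * (real k powr \<alpha>) ^ M"
    using lam k unfolding \<alpha>_def by simp
  also have "(real k powr \<alpha>) ^ M = (real k powr real M) powr \<alpha>"
    using k by (simp add: powr_power powr_powr mult.commute)
  also have "\<dots> = (real k ^ M) powr \<alpha>"
    using k by (simp add: powr_realpow)
  also have "k * (b + c) * lam * \<dots> \<le> k * (b + c) * lam * real n powr \<alpha>"
    using M(1) lam b_pos c_pos k unfolding \<alpha>_def
    by (intro mult_left_mono powr_mono2) (simp_all flip: of_nat_power)
  finally show ?thesis
    unfolding \<alpha>_def by simp
qed

lemma walk_sublinear:
  assumes lam: "2 \<le> lam"
  shows "(\<lambda>n. walk n / real n) \<longlonglongrightarrow> 0"
proof -
  define \<alpha> where "\<alpha> = log k lam"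
  define K where "K = real_of_int (k * (b + c) * lam)"
  have "\<alpha> < 1"
    using lam k_ge_2 lam_less_k unfolding \<alpha>_def by simp
  have "\<bar>walk n / real n\<bar> \<le> real n powr (\<alpha> - 1) * K" if "1 \<le> n" for n
    using abs_walk_le_powr[OF lam that] that
    by (simp add: abs_divide pos_divide_le_eq powr_diff K_def \<alpha>_def field_simps)
  then have "\<forall>\<^sub>F n in sequentially. norm (walk n / real n) \<le> norm (real n powr (\<alpha> - 1)) * K"
    by (intro eventually_sequentiallyI[of 1]) simp
  moreover have "(\<lambda>n. real n powr (\<alpha> - 1)) \<longlonglongrightarrow> 0"
    using \<open>\<alpha> < 1\<close> by (intro tendsto_neg_powr filterlim_real_sequentially) simp
  ultimately show ?thesis
    by (rule tendsto_0_le[rotated])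
qed

lemma not_wap_if_criterion_fails:
  assumes "2 \<le> lam" and "\<And>j. 1 \<le> j \<Longrightarrow> j \<le> k \<Longrightarrow> phi_walk 0 j < 0"
    and "lam * (peak 0 - c) + peak 1 < peak 0"
  shows "\<not> weak_abelian_periodic w"
  using not_wap_if_sublinear_divergent walk_tendsto_bot_if_criterion_fails[OF assms]
    walk_sublinear[OF assms(1)] by blast

section \<open>The criterion in terms of the graphic\<close>

abbreviation graphic_bc :: "nat list \<Rightarrow> real \<Rightarrow> real" where
  "graphic_bc \<equiv> graphic (real (cnt 1 f0)) (real (cnt 0 f1))"

lemma graphic_phi_of_nat: "graphic_bc (phi x) (real j) = phi_walk x j"
  by (simp only: graphic_of_nat graph_pt_phi)

lemma graph_pt_f0: "graph_pt (real (cnt 1 f0)) (real (cnt 0 f1)) f0 j = phi_walk 0 j"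
  using graph_pt_phi[of 0 j] unfolding phi_def by simp

lemma graphic_f0_end: "graphic_bc f0 (real k) = - b * lam"
  using graph_pt_f0[of k] phi_walk_full[of 0] by (simp add: step_def)

lemma Max_graphic_one_positions:
  assumes "1 \<in> set (phi x)"
  shows "Max {graphic_bc (phi x) (real i) | i. 1 \<le> i \<and> i \<le> k \<and> phi x ! (i - 1) = 1} = peak x"
proof -
  have set_eq: "{graphic_bc (phi x) (real i) | i. 1 \<le> i \<and> i \<le> k \<and> phi x ! (i - 1) = 1}
      = real_of_int ` phi_walk x ` one_positions x"
    unfolding graphic_phi_of_nat one_positions_def by auto
  have mono: "mono real_of_int"
    by (rule monoI) simp
  have fin: "finite (phi_walk x ` one_positions x)"
    using finite_one_positions by simp
  obtain i where "i \<in> one_positions x"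
    using peak_attained[OF assms] .
  then have ne: "phi_walk x ` one_positions x \<noteq> {}"
    by blast
  show ?thesis
    unfolding set_eq peak_def by (rule mono_Max_commute[OF mono fin ne, symmetric])
qed

lemma wap_if_graphic_zero:
  assumes "0 < x" "x \<le> real k" "graphic_bc f0 x = 0"
  shows "weak_abelian_periodic w"
proof (cases "1 \<le> lam")
  case True
  obtain i where i: "1 \<le> i" "i \<le> k" "0 \<le> graph_pt (real (cnt 1 f0)) (real (cnt 0 f1)) f0 i"
    using graphic_zero_imp_graph_pt_nonneg[OF assms] by blast
  then have "0 \<le> walk i"
    using walk_prefix[of i] graph_pt_f0[of i] by simp
  with True i(1) show ?thesis
    by (rule wap_if_nonneg_walk)
next
  case False
  then show ?thesis
    by (simp add: wap_if_lam_le_1)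
qed

lemma wap_if_graphic_end_ge:
  assumes "- real (cnt 1 f0) \<le> graphic_bc f0 (real k)"
  shows "weak_abelian_periodic w"
proof (rule wap_if_lam_le_1)
  have "real_of_int b * real_of_int lam \<le> real_of_int b * 1"
    using assms graphic_f0_end by (simp add: b_def)
  then show "lam \<le> 1"
    using b_pos by (simp add: mult_le_cancel_left_pos)
qed

lemma wap_iff_graphic_criterion:
  assumes nonzero: "\<forall>x. 0 < x \<and> x \<le> real k \<longrightarrow> graphic_bc f0 x \<noteq> 0"
    and steep: "graphic_bc f0 (real k) < - real (cnt 1 f0)"
  defines "A \<equiv> Max {graphic_bc f0 (real i) | i. 1 \<le> i \<and> i \<le> k \<and> f0 ! (i - 1) = 1}"
    and "t \<equiv> Max {graphic_bc f1 (real i) | i. 1 \<le> i \<and> i \<le> k \<and> f1 ! (i - 1) = 1}"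
  shows "weak_abelian_periodic w \<longleftrightarrow>
    graphic_bc f0 (real k) * ((A - real (cnt 0 f1)) / - real (cnt 1 f0)) + t \<ge> A"
proof -
  have "real_of_int b * 1 < real_of_int b * real_of_int lam"
    using steep graphic_f0_end by (simp add: b_def)
  then have lam: "2 \<le> lam"
    using b_pos by (simp add: mult_less_cancel_left_pos)
  have "phi_walk 0 1 = - b"
    using walk_prefix[of 1] walk_Suc[of 0] w_0 k_ge_2 by (simp add: step_def)
  then have "graph_pt (real (cnt 1 f0)) (real (cnt 0 f1)) f0 1 < 0"
    using graph_pt_f0[of 1] b_pos by simp
  then have neg: "\<And>j. 1 \<le> j \<Longrightarrow> j \<le> k \<Longrightarrow> phi_walk 0 j < 0"
    using graph_pt_neg_if_graphic_nonzero[OF nonzero] graph_pt_f0 by simp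
  have "A = peak 0" "t = peak 1"
    using Max_graphic_one_positions[of 0] Max_graphic_one_positions[of 1] one_in_f0 one_in_f1 lam
    unfolding A_def t_def by (simp_all add: phi_def)
  then have "graphic_bc f0 (real k) * ((A - real (cnt 0 f1)) / - real (cnt 1 f0)) + t
      = real_of_int (lam * (peak 0 - c) + peak 1)"
    using graphic_f0_end b_pos by (simp add: b_def c_def field_simps)
  moreover have "weak_abelian_periodic w \<longleftrightarrow> peak 0 \<le> lam * (peak 0 - c) + peak 1"
    using wap_if_criterion[OF lam] not_wap_if_criterion_fails[OF lam neg] by linarith
  ultimately show ?thesis
    using \<open>A = peak 0\<close> by (simp only: of_int_le_iff)
qed

end

theorem theorem1:
  fixes k :: nat and f0 f1 :: "nat list" and w :: "nat \<Rightarrow> nat"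
  assumes bin0: "binword f0" and bin1: "binword f1"
    and unif: "uniform_morph k f0 f1"
    and prim: "primitive_morph f0 f1"
    and start: "f0 \<noteq> [] \<and> hd f0 = 0"
    and fix_w: "\<forall>n i. i < length ((morph f0 f1 ^^ n) [0]) \<longrightarrow> w i = (morph f0 f1 ^^ n) [0] ! i"
  defines "b \<equiv> real (cnt 1 f0)"
    and "c \<equiv> real (cnt 0 f1)"
  shows
    "((\<exists>x::real. 0 < x \<and> x \<le> real k \<and> graphic b c f0 x = 0) \<longrightarrow> weak_abelian_periodic w)
   \<and> (graphic b c f0 (real k) \<ge> - b \<longrightarrow> weak_abelian_periodic w)
   \<and> ((\<forall>x::real. 0 < x \<and> x \<le> real k \<longrightarrow> graphic b c f0 x \<noteq> 0) \<and> graphic b c f0 (real k) < - b \<longrightarrow>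
       (let \<Delta> = graphic b c f0 (real k);
            A = Max {graphic b c f0 (real i) | i. 1 \<le> i \<and> i \<le> k \<and> f0 ! (i - 1) = 1};
            t = Max {graphic b c f1 (real i) | i. 1 \<le> i \<and> i \<le> k \<and> f1 ! (i - 1) = 1}
        in weak_abelian_periodic w \<longleftrightarrow> \<Delta> * ((A - c) / - b) + t \<ge> A))"
proof -
  have fp: "uniform_fixed_point k f0 f1 w"
    using bin0 bin1 unif prim start fix_w by (rule uniform_fixed_point.intro)
  show ?thesis
    unfolding b_def c_def Let_def
    using uniform_fixed_point.wap_if_graphic_zero[OF fp]
      uniform_fixed_point.wap_if_graphic_end_ge[OF fp]
      uniform_fixed_point.wap_iff_graphic_criterion[OF fp]
    by blast
qed

end
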